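(* Let $\mathcal{D}=(V,\Phi)$ be a finite directed graph with adjacency matrix $M\in\{0,1\}^{V\times V}$ ($M_{vw}=1$ iff $(v,w)\in\Phi$). Let $\boldsymbol{\alpha}(t),\boldsymbol{\beta}(t)\in[0,+\infty)^V$ ($t\ge0$) be vector sequences such that $\boldsymbol{\alpha}(t)$ is non-decreasing in every component and $\boldsymbol{\beta}(t)$ is convergent, and let $\mathbf{r},\mathbf{s}\in(0,+\infty)^V$ with $r_v=s_v^{-1}$ for all $v$. Set $W_{vw}=r_vM_{vw}s_w$. Define $\boldsymbol{\omega}(t),\boldsymbol{\eta}(t)$ by $\boldsymbol{\omega}(0)=\boldsymbol{\eta}(0)=\mathbf{1}$ and, for all $v\in V$, $t\ge0$, $$\omega_v(t+1)=\frac{1}{1+\alpha_v(t)+\sum_{w}W_{vw}(1-\omega_w(t))},\qquad \eta_v(t+1)=1+\beta_v(t)+\sum_w M_{vw}\,\omega_w(t)\,\eta_w(t).$$ Assume that for every node $v$ belonging to a non-trivial strongly connected component of $\mathcal{D}$ there exists a node $w$ reachable from $v$ such that the sequence $\alpha_w(t)$ is not identically zero. Then $\boldsymbol{\eta}(t)$ converges, and $\boldsymbol{\omega}(t)$ converges and is non-increasing in every component. Moreover, $\lim_{t\to\infty}\omega_v(t)<1$ for every node $v$ such that there exists $w$ reachable from $v$ with $\alpha_w(t)$ not identically zero.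
   Context: A path from $v$ to $w$ of length $l\ge0$ is a list $(u_0,\dots,u_l)$ with $u_0=v$, $u_l=w$, $(u_{i-1},u_i)\in\Phi$; $w$ is reachable from $v$ if such a path exists for some $l\ge0$. A strongly connected component of $\mathcal{D}$ is a maximal induced subdigraph $\mathcal{D}[U]$ in which every node is reachable from every other node; it is trivial if it consists of a single node without a self-loop, and non-trivial otherwise. *)

theory Defs
  imports Complex_Main
begin

definition adj :: "('a \<times> 'a) set \<Rightarrow> 'a \<Rightarrow> 'a \<Rightarrow> real" where
  "adj Phi v w = (if (v, w) \<in> Phi then 1 else 0)"

definition reachable :: "('a \<times> 'a) set \<Rightarrow> 'a \<Rightarrow> 'a \<Rightarrow> bool" where
  "reachable Phi v w \<longleftrightarrow> (v, w) \<in> Phi\<^sup>*"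

definition scc_of :: "'a set \<Rightarrow> ('a \<times> 'a) set \<Rightarrow> 'a \<Rightarrow> 'a set" where
  "scc_of V Phi v = {w \<in> V. reachable Phi v w \<and> reachable Phi w v}"

definition in_nontrivial_scc :: "'a set \<Rightarrow> ('a \<times> 'a) set \<Rightarrow> 'a \<Rightarrow> bool" where
  "in_nontrivial_scc V Phi v \<longleftrightarrow>
     \<not> (\<exists>u. scc_of V Phi v = {u} \<and> (u, u) \<notin> Phi)"

primrec omega_seq :: "'a set \<Rightarrow> ('a \<Rightarrow> 'a \<Rightarrow> real) \<Rightarrow> (nat \<Rightarrow> 'a \<Rightarrow> real)
                        \<Rightarrow> nat \<Rightarrow> 'a \<Rightarrow> real" where
  "omega_seq V W alpha 0 = (\<lambda>v. 1)"
| "omega_seq V W alpha (Suc t) = (\<lambda>v. 1 / (1 + alpha t v +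
      (\<Sum>w\<in>V. W v w * (1 - omega_seq V W alpha t w))))"

primrec eta_seq :: "'a set \<Rightarrow> ('a \<Rightarrow> 'a \<Rightarrow> real) \<Rightarrow> (nat \<Rightarrow> 'a \<Rightarrow> real)
                      \<Rightarrow> (nat \<Rightarrow> 'a \<Rightarrow> real) \<Rightarrow> nat \<Rightarrow> 'a \<Rightarrow> real" where
  "eta_seq V M omega beta 0 = (\<lambda>v. 1)"
| "eta_seq V M omega beta (Suc t) = (\<lambda>v. 1 + beta t v +
      (\<Sum>w\<in>V. M v w * omega t w * eta_seq V M omega beta t w))"

end

theory Submission
  imports Defs
begin

text \<open>
  Since alpha is non-decreasing, the omega recursion is monotone and omega(t) decreases to a limit L,
  which satisfies 1/L \<ge> 1 + alpha + W (1 - L); L < 1 propagates backwards along edges from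
  nodes where alpha is not identically zero. The eta recursion is linear,
  eta(t+1) = c(t) + B(t) eta(t), with coefficients converging to c and to the matrix M diag(L);
  it converges as soon as the limit matrix admits a positive vector y with M diag(L) y < y
  componentwise (spectral radius below one). Such a y is glued together from three blocks along
  which the limit matrix is block triangular. Call a node driven if it reaches a node where alpha
  is not identically zero. On driven nodes with L > 0, the vector
  s (1/L - 1) is subinvariant and strict wherever alpha is eventually positive or an edge leads to
  a node with L = 0; since every such node reaches a strict one, the slack can be spread to all of
  them. Nodes with L = 0 have zero columns. Undriven nodes lie on no cycle by hypothesis, so the
  matrix is nilpotent there.
\<close>

lemma rtrancl_crossing_edge:
  "(x, p) \<in> R\<^sup>* \<Longrightarrow> p \<in> P \<Longrightarrow> x \<notin> P \<Longrightarrow> \<exists>a b. (a, b) \<in> R \<and> a \<notin> P \<and> b \<in> P"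
  by (induction rule: converse_rtrancl_induct) auto

lemma in_nontrivial_scc_if_on_cycle:
  assumes "Phi \<subseteq> V \<times> V" "(v, v) \<in> Phi\<^sup>+"
  shows "in_nontrivial_scc V Phi v"
  unfolding in_nontrivial_scc_def
proof
  assume "\<exists>u. scc_of V Phi v = {u} \<and> (u, u) \<notin> Phi"
  then obtain u where u: "scc_of V Phi v = {u}" "(u, u) \<notin> Phi" by blast
  obtain x where vx: "(v, x) \<in> Phi" and xv: "(x, v) \<in> Phi\<^sup>*"
    using assms(2) by (meson tranclD)
  then have "v \<in> scc_of V Phi v" "x \<in> scc_of V Phi v"
    using assms(1) by (auto simp: scc_of_def reachable_def)
  then show False using u vx by simp
qed

section \<open>Strictly subinvariant vectors\<close>

definition pos_graph :: "'a set \<Rightarrow> ('a \<Rightarrow> 'a \<Rightarrow> real) \<Rightarrow> ('a \<times> 'a) set" where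
  "pos_graph S B = {(v, w). v \<in> S \<and> w \<in> S \<and> 0 < B v w}"

definition subinvariant :: "'a set \<Rightarrow> ('a \<Rightarrow> 'a \<Rightarrow> real) \<Rightarrow> ('a \<Rightarrow> real) \<Rightarrow> bool" where
  "subinvariant S B z \<longleftrightarrow> (\<forall>v\<in>S. 0 < z v \<and> (\<Sum>w\<in>S. B v w * z w) \<le> z v)"

definition strict_nodes :: "'a set \<Rightarrow> ('a \<Rightarrow> 'a \<Rightarrow> real) \<Rightarrow> ('a \<Rightarrow> real) \<Rightarrow> 'a set" where
  "strict_nodes S B z = {v\<in>S. (\<Sum>w\<in>S. B v w * z w) < z v}"

definition strict_subinvariant :: "'a set \<Rightarrow> ('a \<Rightarrow> 'a \<Rightarrow> real) \<Rightarrow> ('a \<Rightarrow> real) \<Rightarrow> bool" where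
  "strict_subinvariant S B y \<longleftrightarrow> (\<forall>v\<in>S. 0 < y v \<and> (\<Sum>w\<in>S. B v w * y w) < y v)"

lemma strict_subinvariant_union:
  assumes "finite S" "finite T" "S \<inter> T = {}"
    and "strict_subinvariant S B yS" "strict_subinvariant T B yT"
    and no_back_edges: "\<And>v w. v \<in> T \<Longrightarrow> w \<in> S \<Longrightarrow> B v w = 0"
  shows "\<exists>y. strict_subinvariant (S \<union> T) B y"
proof -
  define slack where "slack v = yS v - (\<Sum>w\<in>S. B v w * yS w)" for v
  define C where "C = 1 + Max (insert 0 ((\<lambda>v. (\<Sum>w\<in>T. B v w * yT w) / slack v) ` S))"
  define y where "y w = (if w \<in> S then C * yS w else yT w)" for w
  have slack_pos: "0 < slack v" if "v \<in> S" for v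
    using assms(4) that by (simp add: strict_subinvariant_def slack_def)
  have C_pos: "1 \<le> C"
    unfolding C_def using assms(1) by (simp add: Max_ge)
  have C_slack: "(\<Sum>w\<in>T. B v w * yT w) < C * slack v" if "v \<in> S" for v
  proof -
    have "(\<Sum>w\<in>T. B v w * yT w) / slack v \<le> C - 1"
      unfolding C_def using assms(1) that by (simp add: Max_ge)
    then have "(\<Sum>w\<in>T. B v w * yT w) / slack v < C" by simp
    then show ?thesis using slack_pos[OF that] by (simp add: divide_less_eq)
  qed
  have sum_split: "(\<Sum>w\<in>S \<union> T. B v w * y w) = C * (\<Sum>w\<in>S. B v w * yS w) + (\<Sum>w\<in>T. B v w * yT w)" for v
    using assms(1-3) by (auto simp: sum.union_disjoint y_def sum_distrib_left mult.left_commute intro!: sum.cong)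
  have "0 < y v \<and> (\<Sum>w\<in>S \<union> T. B v w * y w) < y v" if "v \<in> S \<union> T" for v
  proof (cases "v \<in> S")
    case True
    then show ?thesis
      using C_slack[OF True] C_pos assms(4) unfolding sum_split slack_def strict_subinvariant_def
      by (auto simp: y_def algebra_simps)
  next
    case False
    then show ?thesis
      using that assms(5) no_back_edges unfolding sum_split strict_subinvariant_def by (auto simp: y_def)
  qed
  then show ?thesis unfolding strict_subinvariant_def by blast
qed

lemma strict_subinvariant_if_acyclic:
  assumes "finite S" "acyclic (pos_graph S B)"
    and B_nonneg: "\<And>v w. v \<in> S \<Longrightarrow> w \<in> S \<Longrightarrow> 0 \<le> B v w"
  shows "\<exists>y. strict_subinvariant S B y"
  using assms
proof (induction S rule: finite_psubset_induct)
  case (psubset S)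
  show ?case
  proof (cases "S = {}")
    case True
    then show ?thesis by (simp add: strict_subinvariant_def)
  next
    case False
    have "pos_graph S B \<subseteq> S \<times> S" by (auto simp: pos_graph_def)
    then have "finite (pos_graph S B)" using psubset.hyps by (meson finite_SigmaI finite_subset)
    then have "wf (pos_graph S B)" using psubset.prems(1) by (rule finite_acyclic_wf)
    then obtain z where z: "z \<in> S" and source: "\<And>v. (v, z) \<in> pos_graph S B \<Longrightarrow> v \<notin> S"
      using False by (rule wfE_min') blast
    have no_in_edges: "B v z = 0" if "v \<in> S" for v
      using source[of v] psubset.prems(2)[OF that z] that z by (force simp: pos_graph_def)
    have "strict_subinvariant {z} B (\<lambda>_. 1)"
      using no_in_edges[OF z] by (simp add: strict_subinvariant_def)
    moreover obtain y where "strict_subinvariant (S - {z}) B y"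
    proof -
      have "acyclic (pos_graph (S - {z}) B)"
        using psubset.prems(1) by (rule acyclic_subset) (auto simp: pos_graph_def)
      then show thesis
        using psubset.IH[of "S - {z}"] psubset.prems(2) z that by blast
    qed
    ultimately have "\<exists>y. strict_subinvariant ({z} \<union> (S - {z})) B y"
      using psubset.hyps no_in_edges by (intro strict_subinvariant_union) auto
    then show ?thesis using z by (simp add: insert_absorb)
  qed
qed

lemma subinvariant_shrink:
  assumes "finite S" and B_nonneg: "\<And>v w. v \<in> S \<Longrightarrow> w \<in> S \<Longrightarrow> 0 \<le> B v w"
    and sub: "subinvariant S B z"
  obtains z' where "subinvariant S B z'" "strict_nodes S B z \<subseteq> strict_nodes S B z'"
    and "\<And>v u. v \<in> S \<Longrightarrow> u \<in> strict_nodes S B z \<Longrightarrow> 0 < B v u \<Longrightarrow> v \<in> strict_nodes S B z'"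
proof -
  define P where "P = strict_nodes S B z"
  define slack where "slack v = z v - (\<Sum>w\<in>S. B v w * z w)" for v
  define eps where "eps = Min (insert (1/2) ((\<lambda>v. slack v / (2 * z v)) ` P))"
  define z' where "z' v = (if v \<in> P then (1 - eps) * z v else z v)" for v
  have PS: "P \<subseteq> S" and finP: "finite P"
    using \<open>finite S\<close> by (auto simp: P_def strict_nodes_def)
  have z_pos: "0 < z v" and z_sub: "(\<Sum>w\<in>S. B v w * z w) \<le> z v" if "v \<in> S" for v
    using sub that by (auto simp: subinvariant_def)
  have slack_pos: "0 < slack v" if "v \<in> P" for v
    using that by (simp add: P_def strict_nodes_def slack_def)
  have eps_pos: "0 < eps"
    using finP slack_pos z_pos PS by (auto simp: eps_def Min_gr_iff)
  have eps_half: "eps \<le> 1/2"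
    using finP unfolding eps_def by (intro Min_le) auto
  have eps_slack: "eps * z v < slack v" if "v \<in> P" for v
  proof -
    have "eps \<le> slack v / (2 * z v)" using finP that by (simp add: eps_def)
    then show ?thesis using z_pos[of v] slack_pos[OF that] that PS by (auto simp: field_simps)
  qed
  have z'_le: "z' v \<le> z v" if "v \<in> S" for v
    using z_pos[OF that] eps_pos by (simp add: z'_def)
  have z'_less: "z' v < z v" if "v \<in> P" for v
    using z_pos that PS eps_pos by (auto simp: z'_def)
  have sum_le: "(\<Sum>w\<in>S. B v w * z' w) \<le> (\<Sum>w\<in>S. B v w * z w)" if "v \<in> S" for v
    using that B_nonneg z'_le by (intro sum_mono mult_left_mono) auto
  have strict_P: "(\<Sum>w\<in>S. B v w * z' w) < z' v" if "v \<in> P" for v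
    using sum_le[of v] eps_slack[OF that] that PS by (auto simp: z'_def slack_def algebra_simps)
  have strict_pred: "(\<Sum>w\<in>S. B v w * z' w) < z' v"
    if "v \<in> S" "u \<in> P" "0 < B v u" for v u
  proof (cases "v \<in> P")
    case False
    have "(\<Sum>w\<in>S. B v w * z' w) < (\<Sum>w\<in>S. B v w * z w)"
    proof (rule sum_strict_mono_ex1[OF \<open>finite S\<close>])
      show "\<forall>w\<in>S. B v w * z' w \<le> B v w * z w"
        using that B_nonneg z'_le by (auto intro: mult_left_mono)
      show "\<exists>w\<in>S. B v w * z' w < B v w * z w"
        using that z'_less PS by (intro bexI[of _ u]) auto
    qed
    then show ?thesis using z_sub[OF \<open>v \<in> S\<close>] False by (simp add: z'_def)
  qed (rule strict_P)
  show ?thesis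
  proof
    show "subinvariant S B z'"
      unfolding subinvariant_def
    proof
      fix v assume v: "v \<in> S"
      show "0 < z' v \<and> (\<Sum>w\<in>S. B v w * z' w) \<le> z' v"
      proof (cases "v \<in> P")
        case True
        then show ?thesis using z_pos[OF v] eps_half strict_P[OF True] by (simp add: z'_def)
      next
        case False
        then show ?thesis using z_pos[OF v] sum_le[OF v] z_sub[OF v] by (simp add: z'_def)
      qed
    qed
    show "strict_nodes S B z \<subseteq> strict_nodes S B z'"
      using strict_P PS by (auto simp: P_def strict_nodes_def)
    show "v \<in> strict_nodes S B z'" if "v \<in> S" "u \<in> strict_nodes S B z" "0 < B v u" for v u
      using strict_pred that by (simp add: P_def strict_nodes_def)
  qed
qed

lemma strict_subinvariant_if_reaches_strict_nodes:
  assumes "finite S" and B_nonneg: "\<And>v w. v \<in> S \<Longrightarrow> w \<in> S \<Longrightarrow> 0 \<le> B v w"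
    and "subinvariant S B z"
    and "\<And>v. v \<in> S \<Longrightarrow> \<exists>p\<in>strict_nodes S B z. (v, p) \<in> (pos_graph S B)\<^sup>*"
  shows "\<exists>y. strict_subinvariant S B y"
  using assms(3,4)
proof (induction "card (S - strict_nodes S B z)" arbitrary: z rule: less_induct)
  case less
  show ?case
  proof (cases "S \<subseteq> strict_nodes S B z")
    case True
    then have "strict_subinvariant S B z"
      using less.prems(1) by (auto simp: subinvariant_def strict_subinvariant_def strict_nodes_def)
    then show ?thesis by blast
  next
    case False
    then obtain x where x: "x \<in> S" "x \<notin> strict_nodes S B z" by blast
    then obtain p where "p \<in> strict_nodes S B z" "(x, p) \<in> (pos_graph S B)\<^sup>*"
      using less.prems(2) by blast
    then obtain v u where vu: "(v, u) \<in> pos_graph S B"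
      and v_lax: "v \<notin> strict_nodes S B z" and u_strict: "u \<in> strict_nodes S B z"
      using rtrancl_crossing_edge[of x p "pos_graph S B" "strict_nodes S B z"] x(2) by blast
    then have v: "v \<in> S" and "0 < B v u" by (auto simp: pos_graph_def)
    obtain z' where sub': "subinvariant S B z'" and grow: "strict_nodes S B z \<subseteq> strict_nodes S B z'"
      and "v \<in> strict_nodes S B z'"
      by (rule subinvariant_shrink[OF \<open>finite S\<close> B_nonneg less.prems(1)]) (use v u_strict \<open>0 < B v u\<close> in auto)
    then have "S - strict_nodes S B z' \<subset> S - strict_nodes S B z"
      using v v_lax by (intro psubsetI Diff_mono[OF order_refl grow]) auto
    then have "card (S - strict_nodes S B z') < card (S - strict_nodes S B z)"
      using \<open>finite S\<close> by (meson finite_Diff psubset_card_mono)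
    moreover have "\<exists>p\<in>strict_nodes S B z'. (w, p) \<in> (pos_graph S B)\<^sup>*" if "w \<in> S" for w
      using less.prems(2)[OF that] grow by blast
    ultimately show ?thesis by (rule less.hyps[OF _ sub'])
  qed
qed

section \<open>Linear recurrences with converging coefficients\<close>

lemma strict_subinvariant_contraction_factor:
  assumes "finite S" "strict_subinvariant S B y"
  obtains q where "0 \<le> q" "q < 1" "\<And>v. v \<in> S \<Longrightarrow> (\<Sum>w\<in>S. B v w * y w) < q * y v"
proof
  define q0 where "q0 = Max (insert 0 ((\<lambda>v. (\<Sum>w\<in>S. B v w * y w) / y v) ` S))"
  have y_pos: "0 < y v" and strict: "(\<Sum>w\<in>S. B v w * y w) < y v" if "v \<in> S" for v
    using assms(2) that by (auto simp: strict_subinvariant_def)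
  have "0 \<le> q0" using assms(1) by (simp add: q0_def)
  moreover have "q0 < 1" using assms(1) y_pos strict by (simp add: q0_def)
  ultimately show "0 \<le> (1 + q0) / 2" "(1 + q0) / 2 < 1" by simp_all
  fix v assume v: "v \<in> S"
  have "(\<Sum>w\<in>S. B v w * y w) / y v \<le> q0" using assms(1) v by (simp add: q0_def)
  also have "q0 < (1 + q0) / 2" using \<open>q0 < 1\<close> by simp
  finally show "(\<Sum>w\<in>S. B v w * y w) < (1 + q0) / 2 * y v"
    using y_pos[OF v] by (simp add: divide_less_eq)
qed

lemma strict_subinvariant_fixed_point:
  assumes "finite S" and B_nonneg: "\<And>v w. v \<in> S \<Longrightarrow> w \<in> S \<Longrightarrow> 0 \<le> B v w"
    and c_nonneg: "\<And>v. v \<in> S \<Longrightarrow> 0 \<le> c v" and "strict_subinvariant S B y"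
  obtains x where "\<And>v. v \<in> S \<Longrightarrow> x v = c v + (\<Sum>w\<in>S. B v w * x w)"
proof -
  obtain q where "0 \<le> q" "q < 1" and contr: "\<And>v. v \<in> S \<Longrightarrow> (\<Sum>w\<in>S. B v w * y w) < q * y v"
    using strict_subinvariant_contraction_factor assms(1,4) by blast
  have y_pos: "0 < y v" if "v \<in> S" for v
    using assms(4) that by (simp add: strict_subinvariant_def)
  define u where "u k = ((\<lambda>f v. c v + (\<Sum>w\<in>S. B v w * f w)) ^^ k) (\<lambda>v. 0)" for k
  have u_Suc: "u (Suc k) v = c v + (\<Sum>w\<in>S. B v w * u k w)" for k v
    by (simp add: u_def)
  \<comment> \<open>The iterates from 0 increase and stay below K y, since c \<le> (1 - q) K y and B y \<le> q y.\<close>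
  define K where "K = Max (insert 0 ((\<lambda>v. c v / y v) ` S)) / (1 - q)"
  have K_nonneg: "0 \<le> K"
    using assms(1) \<open>q < 1\<close> by (simp add: K_def)
  have c_le: "c v \<le> (1 - q) * K * y v" if "v \<in> S" for v
  proof -
    have "c v / y v \<le> (1 - q) * K"
      using assms(1) that \<open>q < 1\<close> by (simp add: K_def)
    then show ?thesis using y_pos[OF that] by (simp add: divide_le_eq)
  qed
  have u_props: "\<forall>v\<in>S. 0 \<le> u k v \<and> u k v \<le> u (Suc k) v \<and> u k v \<le> K * y v" for k
  proof (induction k)
    case 0
    then show ?case
      using c_nonneg K_nonneg y_pos by (simp add: u_def less_imp_le)
  next
    case (Suc k)
    show ?case
    proof
      fix v assume v: "v \<in> S"
      have "0 \<le> (\<Sum>w\<in>S. B v w * u k w)"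
        using Suc v B_nonneg by (intro sum_nonneg) auto
      moreover have "(\<Sum>w\<in>S. B v w * u k w) \<le> (\<Sum>w\<in>S. B v w * u (Suc k) w)"
        using Suc v B_nonneg by (intro sum_mono mult_left_mono) auto
      moreover have "(\<Sum>w\<in>S. B v w * u k w) \<le> q * K * y v"
      proof -
        have "(\<Sum>w\<in>S. B v w * u k w) \<le> (\<Sum>w\<in>S. B v w * y w) * K"
          unfolding sum_distrib_right using Suc v B_nonneg
          by (intro sum_mono) (auto simp: mult.assoc mult.commute[of K] intro: mult_left_mono)
        also have "\<dots> \<le> q * y v * K"
          using contr[OF v] K_nonneg by (intro mult_right_mono) auto
        finally show ?thesis by (simp add: ac_simps)
      qed
      ultimately show "0 \<le> u (Suc k) v \<and> u (Suc k) v \<le> u (Suc (Suc k)) v \<and> u (Suc k) v \<le> K * y v"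
        using c_nonneg[OF v] c_le[OF v] by (simp add: u_Suc[of "Suc k"] u_Suc[of k] algebra_simps)
    qed
  qed
  have "convergent (\<lambda>k. u k v)" if "v \<in> S" for v
    using u_props that by (intro Bseq_monoseq_convergent BseqI'[of _ "K * y v"] incseq_imp_monoseq incseq_SucI) auto
  then have u_lim: "(\<lambda>k. u k v) \<longlonglongrightarrow> lim (\<lambda>k. u k v)" if "v \<in> S" for v
    using that by (simp add: convergent_LIMSEQ_iff)
  show ?thesis
  proof
    fix v assume v: "v \<in> S"
    have "(\<lambda>k. u (Suc k) v) \<longlonglongrightarrow> c v + (\<Sum>w\<in>S. B v w * lim (\<lambda>k. u k w))"
      unfolding u_Suc using u_lim by (intro tendsto_intros) auto
    then show "lim (\<lambda>k. u k v) = c v + (\<Sum>w\<in>S. B v w * lim (\<lambda>k. u k w))"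
      using LIMSEQ_Suc[OF u_lim[OF v]] LIMSEQ_unique by blast
  qed
qed

lemma eventually_contracting_LIMSEQ_zero:
  fixes a d :: "nat \<Rightarrow> real"
  assumes a_nonneg: "\<And>t. 0 \<le> a t" and step: "\<And>t. T \<le> t \<Longrightarrow> a (Suc t) \<le> d t + q * a t"
    and "d \<longlonglongrightarrow> 0" "0 \<le> q" "q < 1"
  shows "a \<longlonglongrightarrow> 0"
proof (rule LIMSEQ_I)
  fix e :: real assume "0 < e"
  then obtain N0 where N0: "\<And>t. N0 \<le> t \<Longrightarrow> \<bar>d t\<bar> < e * (1 - q) / 2"
    using LIMSEQ_D[OF \<open>d \<longlonglongrightarrow> 0\<close>, of "e * (1 - q) / 2"] \<open>q < 1\<close> by auto
  define N where "N = max T N0"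
  have bound: "a (N + k) \<le> q ^ k * a N + e / 2" for k
  proof (induction k)
    case 0
    then show ?case using \<open>0 < e\<close> by simp
  next
    case (Suc k)
    have "a (N + Suc k) \<le> d (N + k) + q * a (N + k)" "\<bar>d (N + k)\<bar> < e * (1 - q) / 2"
      using step[of "N + k"] N0[of "N + k"] by (simp_all add: N_def)
    then have "a (N + Suc k) \<le> e * (1 - q) / 2 + q * (q ^ k * a N + e / 2)"
      using mult_left_mono[OF Suc \<open>0 \<le> q\<close>] by linarith
    also have "\<dots> = q ^ Suc k * a N + e / 2" by (simp add: field_simps)
    finally show ?case .
  qed
  have "(\<lambda>k. q ^ k * a N) \<longlonglongrightarrow> 0"
    using \<open>0 \<le> q\<close> \<open>q < 1\<close> by (intro tendsto_mult_left_zero LIMSEQ_power_zero) simp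
  then obtain K where K: "\<And>k. K \<le> k \<Longrightarrow> q ^ k * a N < e / 2"
    using LIMSEQ_D[of _ 0 "e / 2"] \<open>0 < e\<close> by fastforce
  have "\<bar>a t\<bar> < e" if "N + K \<le> t" for t
  proof -
    have "K \<le> t - N" "N + (t - N) = t" using that by auto
    then show ?thesis using bound[of "t - N"] K[of "t - N"] a_nonneg[of t] by simp
  qed
  then show "\<exists>no. \<forall>t\<ge>no. norm (a t - 0) < e" by auto
qed

lemma linear_recurrence_convergent:
  assumes "finite S"
    and x_Suc: "\<And>t v. v \<in> S \<Longrightarrow> x (Suc t) v = c t v + (\<Sum>w\<in>S. B t v w * x t w)"
    and c_lim: "\<And>v. v \<in> S \<Longrightarrow> (\<lambda>t. c t v) \<longlonglongrightarrow> c' v"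
    and B_lim: "\<And>v w. v \<in> S \<Longrightarrow> w \<in> S \<Longrightarrow> (\<lambda>t. B t v w) \<longlonglongrightarrow> B' v w"
    and c_nonneg: "\<And>t v. v \<in> S \<Longrightarrow> 0 \<le> c t v"
    and B_nonneg: "\<And>t v w. v \<in> S \<Longrightarrow> w \<in> S \<Longrightarrow> 0 \<le> B t v w"
    and "strict_subinvariant S B' y" and "v \<in> S"
  shows "convergent (\<lambda>t. x t v)"
proof -
  have y_pos: "0 < y v" if "v \<in> S" for v
    using assms(7) that by (simp add: strict_subinvariant_def)
  have "0 \<le> B' v w" if "v \<in> S" "w \<in> S" for v w
    using B_lim[OF that] by (rule tendsto_lowerbound) (simp_all add: B_nonneg[OF that])
  moreover have "0 \<le> c' v" if "v \<in> S" for v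
    using c_lim[OF that] by (rule tendsto_lowerbound) (simp_all add: c_nonneg[OF that])
  ultimately obtain xs where xs: "\<And>v. v \<in> S \<Longrightarrow> xs v = c' v + (\<Sum>w\<in>S. B' v w * xs w)"
    using strict_subinvariant_fixed_point[OF \<open>finite S\<close>] assms(7) by metis
  obtain q where "0 \<le> q" "q < 1" and contr: "\<And>v. v \<in> S \<Longrightarrow> (\<Sum>w\<in>S. B' v w * y w) < q * y v"
    using strict_subinvariant_contraction_factor assms(1,7) by blast
  have "\<forall>\<^sub>F t in sequentially. \<forall>v\<in>S. (\<Sum>w\<in>S. B t v w * y w) < q * y v"
  proof (rule eventually_ball_finite[OF \<open>finite S\<close>], rule ballI)
    fix v assume "v \<in> S"
    have "(\<lambda>t. \<Sum>w\<in>S. B t v w * y w) \<longlonglongrightarrow> (\<Sum>w\<in>S. B' v w * y w)"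
      using B_lim \<open>v \<in> S\<close> by (intro tendsto_intros) auto
    then show "\<forall>\<^sub>F t in sequentially. (\<Sum>w\<in>S. B t v w * y w) < q * y v"
      using contr[OF \<open>v \<in> S\<close>] by (rule order_tendstoD(2))
  qed
  then obtain T where T: "\<And>t v. T \<le> t \<Longrightarrow> v \<in> S \<Longrightarrow> (\<Sum>w\<in>S. B t v w * y w) < q * y v"
    unfolding eventually_sequentially by blast
  \<comment> \<open>The error x t - xs, measured in the norm weighted by y, contracts up to a vanishing perturbation.\<close>
  define e where "e t v = x t v - xs v" for t v
  define a where "a t = Max (insert 0 ((\<lambda>v. \<bar>e t v\<bar> / y v) ` S))" for t
  define dv where "dv t v = \<bar>c t v - c' v\<bar> + (\<Sum>w\<in>S. \<bar>B t v w - B' v w\<bar> * \<bar>xs w\<bar>)" for t v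
  define d where "d t = (\<Sum>v\<in>S. dv t v / y v)" for t
  have a_nonneg: "0 \<le> a t" for t
    using \<open>finite S\<close> by (simp add: a_def)
  have e_le: "\<bar>e t v\<bar> \<le> a t * y v" if "v \<in> S" for t v
  proof -
    have "\<bar>e t v\<bar> / y v \<le> a t" using \<open>finite S\<close> that by (simp add: a_def)
    then show ?thesis using y_pos[OF that] by (simp add: divide_le_eq)
  qed
  have dv_le: "dv t v \<le> d t * y v" if "v \<in> S" for t v
  proof -
    have "dv t v / y v \<le> d t"
      unfolding d_def using \<open>finite S\<close> that y_pos
      by (intro member_le_sum) (auto simp: dv_def intro!: divide_nonneg_pos add_nonneg_nonneg sum_nonneg)
    then show ?thesis using y_pos[OF that] by (simp add: divide_le_eq)
  qed
  have "d \<longlonglongrightarrow> (\<Sum>v\<in>S. (\<bar>c' v - c' v\<bar> + (\<Sum>w\<in>S. \<bar>B' v w - B' v w\<bar> * \<bar>xs w\<bar>)) / y v)"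
    unfolding d_def dv_def using c_lim B_lim y_pos by (intro tendsto_intros) (auto dest: y_pos)
  then have d_lim: "d \<longlonglongrightarrow> 0" by simp
  have "a (Suc t) \<le> d t + q * a t" if "T \<le> t" for t
  proof -
    have "\<bar>e (Suc t) v\<bar> \<le> (d t + q * a t) * y v" if v: "v \<in> S" for v
    proof -
      have "e (Suc t) v = (c t v - c' v) + (\<Sum>w\<in>S. (B t v w - B' v w) * xs w) + (\<Sum>w\<in>S. B t v w * e t w)"
        unfolding e_def x_Suc[OF v] xs[OF v] by (simp add: algebra_simps sum_subtractf sum.distrib)
      also have "\<bar>\<dots>\<bar> \<le> dv t v + (\<Sum>w\<in>S. B t v w * (a t * y w))"
        unfolding dv_def using B_nonneg[OF v] e_le
        by (intro abs_triangle_ineq[THEN order_trans] add_mono order_trans[OF sum_abs] sum_mono)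
          (auto simp: abs_mult mult_left_mono)
      also have "(\<Sum>w\<in>S. B t v w * (a t * y w)) = a t * (\<Sum>w\<in>S. B t v w * y w)"
        by (simp add: sum_distrib_left mult.left_commute)
      also have "\<dots> \<le> a t * (q * y v)"
        using T[OF \<open>T \<le> t\<close> v] a_nonneg by (simp add: mult_left_mono)
      finally show ?thesis using dv_le[OF v, of t] by (simp add: algebra_simps)
    qed
    moreover have "0 \<le> d t + q * a t"
      using dv_le a_nonneg \<open>0 \<le> q\<close> y_pos unfolding d_def dv_def
      by (intro add_nonneg_nonneg sum_nonneg divide_nonneg_pos) auto
    ultimately show ?thesis
      using \<open>finite S\<close> y_pos by (simp add: a_def divide_le_eq)
  qed
  then have "a \<longlonglongrightarrow> 0"
    using eventually_contracting_LIMSEQ_zero a_nonneg d_lim \<open>0 \<le> q\<close> \<open>q < 1\<close> by blast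
  then have "(\<lambda>t. a t * y v) \<longlonglongrightarrow> 0"
    by (simp add: tendsto_mult_left_zero)
  then have "(\<lambda>t. e t v) \<longlonglongrightarrow> 0"
    by (rule tendsto_0_le[where K = 1]) (use e_le[OF \<open>v \<in> S\<close>] a_nonneg y_pos[OF \<open>v \<in> S\<close>] in simp)
  then have "(\<lambda>t. x t v) \<longlonglongrightarrow> xs v"
    by (simp add: e_def LIM_zero_iff)
  then show ?thesis by (rule convergentI)
qed

section \<open>The recursion for \<open>\<omega>\<close>\<close>

locale omega_recursion =
  fixes V :: "'a set" and W :: "'a \<Rightarrow> 'a \<Rightarrow> real" and alpha :: "nat \<Rightarrow> 'a \<Rightarrow> real"
  assumes finite_V: "finite V"
    and W_nonneg: "\<And>v w. v \<in> V \<Longrightarrow> w \<in> V \<Longrightarrow> 0 \<le> W v w"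
    and alpha_nonneg: "\<And>t v. v \<in> V \<Longrightarrow> 0 \<le> alpha t v"
    and alpha_incseq: "\<And>v. v \<in> V \<Longrightarrow> incseq (\<lambda>t. alpha t v)"
begin

abbreviation omega :: "nat \<Rightarrow> 'a \<Rightarrow> real" where
  "omega \<equiv> omega_seq V W alpha"

definition omega_lim :: "'a \<Rightarrow> real" where
  "omega_lim v = lim (\<lambda>t. omega t v)"

definition driven :: "'a \<Rightarrow> bool" where
  "driven v \<longleftrightarrow> (\<exists>w t. (v, w) \<in> (pos_graph V W)\<^sup>* \<and> alpha t w \<noteq> 0)"

lemma omega_pos_le_1: "v \<in> V \<Longrightarrow> 0 < omega t v \<and> omega t v \<le> 1"
proof (induction t arbitrary: v)
  case (Suc t)
  have "0 \<le> (\<Sum>w\<in>V. W v w * (1 - omega t w))"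
    using Suc W_nonneg by (intro sum_nonneg mult_nonneg_nonneg) auto
  then show ?case using alpha_nonneg[OF Suc.prems, of t] by simp
qed simp

lemma omega_coupling_nonneg: "v \<in> V \<Longrightarrow> 0 \<le> (\<Sum>w\<in>V. W v w * (1 - omega t w))"
  using W_nonneg omega_pos_le_1 by (intro sum_nonneg mult_nonneg_nonneg) auto

lemma omega_Suc_le:
  assumes "v \<in> V" "u \<in> V"
  shows "omega (Suc t) v \<le> 1 / (1 + alpha t v + W v u * (1 - omega t u))"
proof -
  have "W v u * (1 - omega t u) \<le> (\<Sum>w\<in>V. W v w * (1 - omega t w))"
    using assms finite_V W_nonneg omega_pos_le_1 by (intro member_le_sum mult_nonneg_nonneg) auto
  moreover have "0 \<le> W v u * (1 - omega t u)"
    using assms W_nonneg omega_pos_le_1 by simp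
  ultimately show ?thesis
    using alpha_nonneg[OF assms(1), of t] by (simp add: frac_le)
qed

lemma omega_decseq: "v \<in> V \<Longrightarrow> decseq (\<lambda>t. omega t v)"
proof -
  have "omega (Suc t) v \<le> omega t v" if "v \<in> V" for t v
    using that
  proof (induction t arbitrary: v)
    case 0
    then show ?case using omega_pos_le_1[OF 0, of "Suc 0"] by simp
  next
    case (Suc t)
    have "alpha t v \<le> alpha (Suc t) v"
      using alpha_incseq[OF Suc.prems] by (rule incseq_SucD)
    moreover have "(\<Sum>w\<in>V. W v w * (1 - omega t w)) \<le> (\<Sum>w\<in>V. W v w * (1 - omega (Suc t) w))"
      using Suc W_nonneg by (intro sum_mono mult_left_mono) auto
    ultimately show ?case
      using omega_coupling_nonneg[OF Suc.prems, of t] alpha_nonneg[OF Suc.prems, of t]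
      by (simp del: omega_seq.simps(2) add: omega_seq.simps(2)[of V W alpha "Suc t"]
          omega_seq.simps(2)[of V W alpha t] frac_le)
  qed
  then show "v \<in> V \<Longrightarrow> decseq (\<lambda>t. omega t v)"
    by (simp add: decseq_SucI)
qed

lemma omega_tendsto: "v \<in> V \<Longrightarrow> (\<lambda>t. omega t v) \<longlonglongrightarrow> omega_lim v"
  unfolding omega_lim_def using omega_decseq omega_pos_le_1
  by (metis decseq_convergent less_imp_le convergent_LIMSEQ_iff convergentI)

lemma omega_lim_le: "v \<in> V \<Longrightarrow> omega_lim v \<le> omega t v"
  using omega_decseq omega_tendsto by (rule decseq_ge)

lemma omega_lim_nonneg: "v \<in> V \<Longrightarrow> 0 \<le> omega_lim v"
  using omega_tendsto by (rule tendsto_lowerbound) (simp_all add: omega_pos_le_1 less_imp_le)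

lemma omega_lim_less_1_if_driven:
  assumes "v \<in> V" "driven v"
  shows "omega_lim v < 1"
proof -
  obtain w t0 where path: "(v, w) \<in> (pos_graph V W)\<^sup>*" and "alpha t0 w \<noteq> 0"
    using assms(2) by (auto simp: driven_def)
  have "x \<in> V \<longrightarrow> omega_lim x < 1" if "(x, w) \<in> (pos_graph V W)\<^sup>*" for x
    using that
  proof (induction rule: converse_rtrancl_induct)
    case base
    show ?case
    proof
      assume "w \<in> V"
      then have "0 < alpha t0 w" "0 \<le> W w w * (1 - omega t0 w)"
        using \<open>alpha t0 w \<noteq> 0\<close> alpha_nonneg[of w t0] W_nonneg[of w w] omega_pos_le_1[of w t0] by auto
      then have "omega_lim w \<le> 1 / (1 + alpha t0 w + W w w * (1 - omega t0 w))"
        using omega_lim_le[of w "Suc t0"] omega_Suc_le[of w w t0] \<open>w \<in> V\<close> by simp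
      also have "\<dots> < 1" using \<open>0 < alpha t0 w\<close> \<open>0 \<le> W w w * (1 - omega t0 w)\<close> by simp
      finally show "omega_lim w < 1" .
    qed
  next
    case (step x y)
    then have xy: "x \<in> V" "y \<in> V" "0 < W x y" and "omega_lim y < 1"
      by (auto simp: pos_graph_def)
    then obtain t where "omega t y < 1"
      using omega_tendsto[of y] by (metis eventually_sequentially order.refl order_tendstoD(2))
    then have "0 < W x y * (1 - omega t y)" using xy by simp
    moreover have "omega_lim x \<le> 1 / (1 + alpha t x + W x y * (1 - omega t y))"
      using omega_lim_le[of x "Suc t"] omega_Suc_le[of x y t] xy by simp
    ultimately have "omega_lim x < 1"
      using alpha_nonneg[OF xy(1), of t] by (smt (verit) divide_less_eq_1_pos)
    then show ?case ..
  qed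
  then show ?thesis using path assms(1) by blast
qed

lemma omega_lim_fixed_point_bound:
  assumes "v \<in> V" "0 < omega_lim v"
  shows "1 + alpha t v + (\<Sum>w\<in>V. W v w * (1 - omega_lim w)) \<le> 1 / omega_lim v"
proof -
  have "alpha s v = 1 / omega (Suc s) v - 1 - (\<Sum>w\<in>V. W v w * (1 - omega s w))" for s
    using omega_coupling_nonneg[OF assms(1), of s] alpha_nonneg[OF assms(1), of s] by simp
  moreover have "(\<lambda>s. 1 / omega (Suc s) v - 1 - (\<Sum>w\<in>V. W v w * (1 - omega s w)))
      \<longlonglongrightarrow> 1 / omega_lim v - 1 - (\<Sum>w\<in>V. W v w * (1 - omega_lim w))"
    using assms omega_tendsto by (intro tendsto_intros LIMSEQ_Suc) auto
  ultimately have "(\<lambda>s. alpha s v) \<longlonglongrightarrow> 1 / omega_lim v - 1 - (\<Sum>w\<in>V. W v w * (1 - omega_lim w))"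
    by simp
  with alpha_incseq[OF assms(1)] show ?thesis
    by (smt (verit) incseq_le)
qed

lemma driven_if_edge: "(v, w) \<in> pos_graph V W \<Longrightarrow> driven w \<Longrightarrow> driven v"
  unfolding driven_def by (meson converse_rtrancl_into_rtrancl)

end

locale scaled_omega_recursion = omega_recursion +
  fixes M :: "'a \<Rightarrow> 'a \<Rightarrow> real" and s :: "'a \<Rightarrow> real"
  assumes s_pos: "\<And>v. v \<in> V \<Longrightarrow> 0 < s v"
    and W_eq: "\<And>v w. v \<in> V \<Longrightarrow> w \<in> V \<Longrightarrow> W v w = M v w * s w / s v"
begin

lemma M_eq: "v \<in> V \<Longrightarrow> w \<in> V \<Longrightarrow> M v w = W v w * s v / s w"
  using W_eq[of v w] s_pos[of v] s_pos[of w] by (simp add: field_simps)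

lemma M_nonneg: "v \<in> V \<Longrightarrow> w \<in> V \<Longrightarrow> 0 \<le> M v w"
  using M_eq[of v w] W_nonneg[of v w] s_pos[of v] s_pos[of w] by simp

lemma M_pos_iff: "v \<in> V \<Longrightarrow> w \<in> V \<Longrightarrow> 0 < M v w \<longleftrightarrow> 0 < W v w"
  using M_eq[of v w] s_pos[of v] s_pos[of w] by (simp add: zero_less_mult_iff zero_less_divide_iff)

lemma driven_part_strict_subinvariant:
  defines "D \<equiv> {v\<in>V. driven v \<and> 0 < omega_lim v}"
  shows "\<exists>y. strict_subinvariant D (\<lambda>v w. M v w * omega_lim w) y"
proof -
  let ?L = omega_lim
  let ?B = "\<lambda>v w. M v w * ?L w"
  \<comment> \<open>By the fixed-point inequality for L, the defect of z is at least s alpha plus the flow into nodes with L = 0.\<close>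
  define z where "z v = s v * (1 / ?L v - 1)" for v
  define g where "g v w = M v w * s w * (1 - ?L w)" for v w
  have DV: "D \<subseteq> V" and "finite D"
    using finite_V by (auto simp: D_def intro: finite_subset)
  have g_nonneg: "0 \<le> g v w" if "v \<in> V" "w \<in> V" for v w
    using that M_nonneg[of v w] s_pos[of w] omega_lim_le[of w 0] by (simp add: g_def)
  have defect: "(\<Sum>w\<in>D. ?B v w * z w) + s v * alpha t v + (\<Sum>w\<in>V - D. g v w) \<le> z v"
    if "v \<in> D" for v t
  proof -
    have v: "v \<in> V" "0 < ?L v" using that by (auto simp: D_def)
    have "?B v w * z w = g v w" if "w \<in> D" for w
    proof -
      have "?L w * (1 / ?L w - 1) = 1 - ?L w"
        using that by (simp add: D_def right_diff_distrib)
      then show ?thesis by (simp add: z_def g_def mult.assoc mult.left_commute[of "?L w"])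
    qed
    then have "(\<Sum>w\<in>D. ?B v w * z w) + (\<Sum>w\<in>V - D. g v w) = (\<Sum>w\<in>V. g v w)"
      using sum.subset_diff[OF DV finite_V, of "g v"] by simp
    also have "\<dots> = s v * (\<Sum>w\<in>V. W v w * (1 - ?L w))"
      unfolding sum_distrib_left using s_pos[OF v(1)]
      by (intro sum.cong refl) (simp add: W_eq[OF v(1)] g_def)
    finally have "(\<Sum>w\<in>D. ?B v w * z w) + s v * alpha t v + (\<Sum>w\<in>V - D. g v w)
        = s v * (alpha t v + (\<Sum>w\<in>V. W v w * (1 - ?L w)))"
      by (simp add: algebra_simps)
    also have "\<dots> \<le> z v"
      using omega_lim_fixed_point_bound[OF v, of t] s_pos[OF v(1)] by (simp add: z_def)
    finally show ?thesis .
  qed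
  have z_pos: "0 < z v" if "v \<in> D" for v
    using that omega_lim_less_1_if_driven s_pos by (auto simp: D_def z_def)
  have defect_nonneg: "0 \<le> s v * alpha t v + (\<Sum>w\<in>V - D. g v w)" if "v \<in> D" for v t
  proof -
    have "v \<in> V" using that DV by blast
    then have "0 \<le> s v * alpha t v"
      using s_pos alpha_nonneg by (simp add: less_imp_le)
    moreover have "0 \<le> (\<Sum>w\<in>V - D. g v w)"
      using \<open>v \<in> V\<close> g_nonneg by (intro sum_nonneg) auto
    ultimately show ?thesis by simp
  qed
  have sub: "subinvariant D ?B z"
    unfolding subinvariant_def using defect[of _ 0] defect_nonneg[of _ 0] z_pos by fastforce
  have strict: "v \<in> strict_nodes D ?B z"
    if "v \<in> D" and "0 < s v * alpha t v + (\<Sum>w\<in>V - D. g v w)" for v t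
    using that defect[of v t] by (simp add: strict_nodes_def)
  have "\<exists>p\<in>strict_nodes D ?B z. (v, p) \<in> (pos_graph D ?B)\<^sup>*" if v: "v \<in> D" for v
  proof -
    obtain w t where path: "(v, w) \<in> (pos_graph V W)\<^sup>*" and "alpha t w \<noteq> 0"
      using v by (auto simp: D_def driven_def)
    have "x \<in> D \<longrightarrow> (\<exists>p\<in>strict_nodes D ?B z. (x, p) \<in> (pos_graph D ?B)\<^sup>*)"
      if "(x, w) \<in> (pos_graph V W)\<^sup>*" for x
      using that
    proof (induction rule: converse_rtrancl_induct)
      case base
      have "w \<in> D \<Longrightarrow> 0 < s w * alpha t w + (\<Sum>u\<in>V - D. g w u)"
        using \<open>alpha t w \<noteq> 0\<close> alpha_nonneg[of w t] s_pos[of w] DV g_nonneg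
        by (intro add_pos_nonneg sum_nonneg) auto
      then show ?case using strict by blast
    next
      case (step x y)
      show ?case
      proof
        assume "x \<in> D"
        have y: "y \<in> V" "0 < M x y" "driven y"
          using step.hyps \<open>alpha t w \<noteq> 0\<close> M_pos_iff by (auto simp: pos_graph_def driven_def)
        show "\<exists>p\<in>strict_nodes D ?B z. (x, p) \<in> (pos_graph D ?B)\<^sup>*"
        proof (cases "0 < ?L y")
          case True
          then have "(x, y) \<in> pos_graph D ?B" "y \<in> D"
            using \<open>x \<in> D\<close> y by (auto simp: pos_graph_def D_def)
          then show ?thesis using step.IH by (meson converse_rtrancl_into_rtrancl)
        next
          case False
          then have "y \<in> V - D" "0 < g x y"
            using y s_pos omega_lim_nonneg[of y] by (auto simp: D_def g_def)
          then have "0 < (\<Sum>u\<in>V - D. g x u)"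
            using finite_V g_nonneg \<open>x \<in> D\<close> DV by (intro sum_pos2) auto
          then have "x \<in> strict_nodes D ?B z"
            using \<open>x \<in> D\<close> DV alpha_nonneg s_pos
            by (intro strict[of x 0] add_nonneg_pos) (auto simp: less_imp_le)
          then show ?thesis by blast
        qed
      qed
    qed
    then show ?thesis using path v by blast
  qed
  then show ?thesis
    using DV M_nonneg omega_lim_nonneg
    by (intro strict_subinvariant_if_reaches_strict_nodes[OF \<open>finite D\<close> _ sub]) (simp add: subset_iff)
qed

lemma limit_matrix_strict_subinvariant:
  assumes cycle_driven: "\<And>v. (v, v) \<in> (pos_graph V W)\<^sup>+ \<Longrightarrow> driven v"
  shows "\<exists>y. strict_subinvariant V (\<lambda>v w. M v w * omega_lim w) y"
proof -
  let ?B = "\<lambda>v w. M v w * omega_lim w"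
  define D where "D = {v\<in>V. driven v \<and> 0 < omega_lim v}"
  define Z where "Z = {v\<in>V. driven v \<and> omega_lim v = 0}"
  define U where "U = {v\<in>V. \<not> driven v}"
  have fin: "finite D" "finite Z" "finite U"
    using finite_V by (auto simp: D_def Z_def U_def)
  have B_nonneg: "0 \<le> ?B v w" if "v \<in> V" "w \<in> V" for v w
    using that M_nonneg omega_lim_nonneg by simp
  have "pos_graph Z ?B = {}"
    by (auto simp: Z_def pos_graph_def)
  then obtain yZ where yZ: "strict_subinvariant Z ?B yZ"
    using fin B_nonneg strict_subinvariant_if_acyclic[of Z ?B] by (auto simp: Z_def acyclic_def)
  obtain yD where yD: "strict_subinvariant D ?B yD"
    using driven_part_strict_subinvariant unfolding D_def by blast
  obtain yU where yU: "strict_subinvariant U ?B yU"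
  proof -
    have "pos_graph U ?B \<subseteq> pos_graph V W"
      using M_pos_iff omega_lim_nonneg by (auto simp: pos_graph_def U_def zero_less_mult_iff dest!: leD)
    then have "(pos_graph U ?B)\<^sup>+ \<subseteq> (pos_graph V W)\<^sup>+"
      by (rule trancl_mono_subset)
    moreover have "(v, v) \<in> (pos_graph U ?B)\<^sup>+ \<Longrightarrow> \<not> driven v" for v
      by (auto simp: U_def pos_graph_def dest: tranclD)
    ultimately have "acyclic (pos_graph U ?B)"
      using cycle_driven unfolding acyclic_def by blast
    then show thesis
      using fin B_nonneg strict_subinvariant_if_acyclic[of U ?B] that by (auto simp: U_def)
  qed
  have "\<exists>y. strict_subinvariant (Z \<union> D) ?B y"
    by (rule strict_subinvariant_union[OF fin(2,1) _ yZ yD]) (auto simp: Z_def D_def)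
  then obtain yZD where yZD: "strict_subinvariant (Z \<union> D) ?B yZD" ..
  have no_edge_to_driven: "?B v w = 0" if "v \<in> U" "w \<in> Z \<union> D" for v w
  proof -
    have "\<not> 0 < W v w"
      using that driven_if_edge[of v w] by (auto simp: U_def Z_def D_def pos_graph_def)
    then show ?thesis
      using that M_pos_iff[of v w] M_nonneg[of v w] by (auto simp: U_def Z_def D_def)
  qed
  have "\<exists>y. strict_subinvariant ((Z \<union> D) \<union> U) ?B y"
    using fin no_edge_to_driven
    by (intro strict_subinvariant_union[OF _ _ _ yZD yU]) (auto simp: Z_def D_def U_def)
  moreover have "(Z \<union> D) \<union> U = V"
    using omega_lim_nonneg by (auto simp: Z_def D_def U_def order_le_less)
  ultimately show ?thesis by simp
qed

end

theorem theorem2: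
  fixes V :: "'a set" and Phi :: "('a \<times> 'a) set"
    and alpha beta :: "nat \<Rightarrow> 'a \<Rightarrow> real" and r s :: "'a \<Rightarrow> real"
  assumes finV: "finite V"
    and PhiV: "Phi \<subseteq> V \<times> V"
    and alpha_nonneg: "\<And>t v. v \<in> V \<Longrightarrow> alpha t v \<ge> 0"
    and beta_nonneg: "\<And>t v. v \<in> V \<Longrightarrow> beta t v \<ge> 0"
    and alpha_mono: "\<And>v. v \<in> V \<Longrightarrow> incseq (\<lambda>t. alpha t v)"
    and beta_conv: "\<And>v. v \<in> V \<Longrightarrow> convergent (\<lambda>t. beta t v)"
    and r_pos: "\<And>v. v \<in> V \<Longrightarrow> r v > 0"
    and s_pos: "\<And>v. v \<in> V \<Longrightarrow> s v > 0"
    and rs: "\<And>v. v \<in> V \<Longrightarrow> r v = 1 / s v"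
    and hyp: "\<And>v. v \<in> V \<Longrightarrow> in_nontrivial_scc V Phi v \<Longrightarrow>
               \<exists>w. reachable Phi v w \<and> (\<exists>t. alpha t w \<noteq> 0)"
  defines "\<omega> \<equiv> omega_seq V (\<lambda>v w. r v * adj Phi v w * s w) alpha"
    and "\<eta> \<equiv> eta_seq V (adj Phi) (omega_seq V (\<lambda>v w. r v * adj Phi v w * s w) alpha) beta"
  shows "(\<forall>v\<in>V. convergent (\<lambda>t. \<eta> t v)) \<and>
         (\<forall>v\<in>V. convergent (\<lambda>t. \<omega> t v) \<and> decseq (\<lambda>t. \<omega> t v)) \<and>
         (\<forall>v\<in>V. (\<exists>w. reachable Phi v w \<and> (\<exists>t. alpha t w \<noteq> 0)) \<longrightarrow>
                 lim (\<lambda>t. \<omega> t v) < 1)"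
proof -
  interpret scaled_omega_recursion V "\<lambda>v w. r v * adj Phi v w * s w" alpha "adj Phi" s
    using finV alpha_nonneg alpha_mono r_pos s_pos rs
    by unfold_locales (auto simp: adj_def less_imp_le)
  have graph: "pos_graph V (\<lambda>v w. r v * adj Phi v w * s w) = Phi"
    using PhiV r_pos s_pos by (auto simp: pos_graph_def adj_def)
  have driven_iff: "driven v \<longleftrightarrow> (\<exists>w. reachable Phi v w \<and> (\<exists>t. alpha t w \<noteq> 0))" for v
    by (auto simp: driven_def graph reachable_def)
  have "driven v" if "(v, v) \<in> (pos_graph V (\<lambda>v w. r v * adj Phi v w * s w))\<^sup>+" for v
  proof -
    have cycle: "(v, v) \<in> Phi\<^sup>+" using that by (simp add: graph)
    then have "v \<in> V" using PhiV by (auto dest: tranclD)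
    then show ?thesis
      using hyp in_nontrivial_scc_if_on_cycle[OF PhiV cycle] by (simp add: driven_iff)
  qed
  then obtain y where y: "strict_subinvariant V (\<lambda>v w. adj Phi v w * omega_lim w) y"
    using limit_matrix_strict_subinvariant by blast
  have "convergent (\<lambda>t. \<eta> t v)" if "v \<in> V" for v
  proof (rule linear_recurrence_convergent[OF finV _ _ _ _ _ y that])
    show "\<eta> (Suc t) v = (1 + beta t v) + (\<Sum>w\<in>V. adj Phi v w * omega t w * \<eta> t w)" for t v
      by (simp add: \<eta>_def)
    show "(\<lambda>t. 1 + beta t v) \<longlonglongrightarrow> 1 + lim (\<lambda>t. beta t v)" if "v \<in> V" for v
      using beta_conv[OF that] by (intro tendsto_add tendsto_const) (simp add: convergent_LIMSEQ_iff)
    show "(\<lambda>t. adj Phi v w * omega t w) \<longlonglongrightarrow> adj Phi v w * omega_lim w" if "v \<in> V" "w \<in> V" for v w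
      using omega_tendsto[OF that(2)] by (rule tendsto_mult_left)
  qed (use beta_nonneg omega_pos_le_1 in \<open>auto simp: adj_def less_imp_le\<close>)
  then show ?thesis
    using omega_tendsto omega_decseq omega_lim_less_1_if_driven
    unfolding \<omega>_def driven_iff omega_lim_def by (auto intro: convergentI)
qed

end
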